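(* Let $A\in\mathcal U=\mathbb Q\langle\mathcal X\rangle$ and let $w=x_0^{k_1}x_1x_0^{k_2}x_1\cdots x_0^{k_d}x_1x_0^{k_{d+1}}$ be a word ($d\ge0$, $k_i\ge0$). Then, in iterated Sweedler notation $\Delta_ш^{(n)}(A)=A_{(1)}\otimes\cdots\otimes A_{(n+1)}$, $A\circledast w=A_{(1)}\,x_0^{k_1}\,S(A_{(2)})\,x_1\,A_{(3)}\,x_0^{k_2}\,S(A_{(4)})\,x_1\,A_{(5)}\cdots x_0^{k_d}\,S(A_{(2d)})\,x_1\,A_{(2d+1)}\,x_0^{k_{d+1}}$.
   Context: $\mathcal X=\{x_0,x_1\}$; $\mathfrak f_{\mathcal X}$ is the free Lie algebra over $\mathbb Q$ on $\mathcal X$ with bracket $[-,-]$, and its universal enveloping algebra is $\mathcal U=\mathbb Q\langle\mathcal X\rangle$ with concatenation and the coproduct $\Delta_ш$ (concatenation-multiplicative, $x_i$ primitive); Sweedler notation $\Delta_ш(A)=A_{(1)}\otimes A_{(2)}$. $S$ is the antipode $S(\varepsilon_1\cdots\varepsilon_n)=(-1)^n\varepsilon_n\cdots\varepsilon_1$. For $f\in\mathfrak f_{\mathcal X}$ let $d_f$ be the Lie derivation with $d_f(x_0)=0$, $d_f(x_1)=[x_1,f]$, and $f\triangleright g=d_f(g)$ for $f,g\in\mathfrak f_{\mathcal X}$; this makes $(\mathfrak f_{\mathcal X},[-,-],\triangleright)$ a post-Lie algebra. Extend $\triangleright$ to $\mathcal U\times\mathcal U\to\mathcal U$ (uniquely)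 by the rules $x\triangleright\mathbf1=0$, $\mathbf1\triangleright A=A$, $xA\triangleright y=x\triangleright(A\triangleright y)-(x\triangleright A)\triangleright y$, $A\triangleright BC=(A_{(1)}\triangleright B)(A_{(2)}\triangleright C)$ for $x,y\in\mathfrak f_{\mathcal X}$, $A,B,C\in\mathcal U$. The Grossman–Larson product is $A\circledast B=A_{(1)}(A_{(2)}\triangleright B)$. *)

theory Defs
  imports Complex_Main
begin

datatype letter = X0 | X1

type_synonym word = "letter list"

text \<open>Elements of U: rational-valued functions on words with finite support
  (noncommutative polynomials); the basis element for a word w is basis w.\<close>
type_synonym ncpoly = "word \<Rightarrow> rat"

definition U :: "ncpoly set" where
  "U = {a. finite {w. a w \<noteq> 0}}"

definition supp :: "ncpoly \<Rightarrow> word set" where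
  "supp a = {w. a w \<noteq> 0}"

definition basis :: "word \<Rightarrow> ncpoly" where
  "basis w = (\<lambda>v. if v = w then 1 else 0)"

definition nc_one :: ncpoly where "nc_one = basis []"
definition nc_zero :: ncpoly where "nc_zero = (\<lambda>_. 0)"
definition nc_add :: "ncpoly \<Rightarrow> ncpoly \<Rightarrow> ncpoly" where
  "nc_add a b = (\<lambda>w. a w + b w)"
definition nc_diff :: "ncpoly \<Rightarrow> ncpoly \<Rightarrow> ncpoly" where
  "nc_diff a b = (\<lambda>w. a w - b w)"
definition nc_smult :: "rat \<Rightarrow> ncpoly \<Rightarrow> ncpoly" where
  "nc_smult c a = (\<lambda>w. c * a w)"

definition nc_mult :: "ncpoly \<Rightarrow> ncpoly \<Rightarrow> ncpoly" where
  "nc_mult a b = (\<lambda>w. \<Sum>i\<le>length w. a (take i w) * b (drop i w))"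

definition nc_sum :: "('i \<Rightarrow> ncpoly) \<Rightarrow> 'i set \<Rightarrow> ncpoly" where
  "nc_sum F I = (\<lambda>w. \<Sum>i\<in>I. F i w)"

definition nc_sum_list :: "ncpoly list \<Rightarrow> ncpoly" where
  "nc_sum_list xs = (\<lambda>w. sum_list (map (\<lambda>a. a w) xs))"

definition bracket :: "ncpoly \<Rightarrow> ncpoly \<Rightarrow> ncpoly" where
  "bracket a b = nc_diff (nc_mult a b) (nc_mult b a)"

inductive_set lieX :: "ncpoly set" where
  gen0: "basis [X0] \<in> lieX"
| gen1: "basis [X1] \<in> lieX"
| add: "a \<in> lieX \<Longrightarrow> b \<in> lieX \<Longrightarrow> nc_add a b \<in> lieX"
| smult: "a \<in> lieX \<Longrightarrow> nc_smult c a \<in> lieX"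
| brk: "a \<in> lieX \<Longrightarrow> b \<in> lieX \<Longrightarrow> bracket a b \<in> lieX"

text \<open>cop w lists the terms u \<otimes> v of the shuffle coproduct of the word w
  (with multiplicity): letters are primitive and the coproduct is multiplicative.\<close>
fun cop :: "word \<Rightarrow> (word \<times> word) list" where
  "cop [] = [([], [])]"
| "cop (x # w) = map (\<lambda>(u, v). (x # u, v)) (cop w) @ map (\<lambda>(u, v). (u, x # v)) (cop w)"

text \<open>deco n w lists the terms w_(1) \<otimes> ... \<otimes> w_(n+1) of the iterated coproduct.\<close>
fun deco :: "nat \<Rightarrow> word \<Rightarrow> word list list" where
  "deco 0 w = [[w]]"
| "deco (Suc n) w = concat (map (\<lambda>(u, v). map (\<lambda>r. u # r) (deco n v)) (cop w))"

text \<open>Sweedler sum  A_(1) \<otimes> A_(2) \<mapsto> F A_(1) A_(2), extended linearly in A.\<close>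
definition sweedler2 :: "ncpoly \<Rightarrow> (word \<Rightarrow> word \<Rightarrow> ncpoly) \<Rightarrow> ncpoly" where
  "sweedler2 A F = nc_sum (\<lambda>w. nc_smult (A w) (nc_sum_list (map (\<lambda>(u, v). F u v) (cop w)))) (supp A)"

text \<open>T is an extension of the post-Lie product triangleright to U x U satisfying the
  defining rules of the paper.\<close>
definition is_ext :: "(ncpoly \<Rightarrow> ncpoly \<Rightarrow> ncpoly) \<Rightarrow> bool" where
  "is_ext T \<longleftrightarrow>
     (\<forall>a\<in>U. \<forall>b\<in>U. T a b \<in> U)
   \<and> (\<forall>a\<in>U. \<forall>b\<in>U. \<forall>c\<in>U. T (nc_add a b) c = nc_add (T a c) (T b c))
   \<and> (\<forall>a\<in>U. \<forall>b\<in>U. \<forall>r. T (nc_smult r a) b = nc_smult r (T a b))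
   \<and> (\<forall>a\<in>U. \<forall>b\<in>U. \<forall>c\<in>U. T a (nc_add b c) = nc_add (T a b) (T a c))
   \<and> (\<forall>a\<in>U. \<forall>b\<in>U. \<forall>r. T a (nc_smult r b) = nc_smult r (T a b))
   \<comment> \<open>f \<triangleright> g = d_f(g) on f_X\<close>
   \<and> (\<forall>f\<in>lieX. T f (basis [X0]) = nc_zero)
   \<and> (\<forall>f\<in>lieX. T f (basis [X1]) = bracket (basis [X1]) f)
   \<and> (\<forall>f\<in>lieX. \<forall>g\<in>lieX. \<forall>h\<in>lieX.
        T f (bracket g h) = nc_add (bracket (T f g) h) (bracket g (T f h)))
   \<comment> \<open>extension rules\<close>
   \<and> (\<forall>x\<in>lieX. T x nc_one = nc_zero)
   \<and> (\<forall>a\<in>U. T nc_one a = a)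
   \<and> (\<forall>x\<in>lieX. \<forall>a\<in>U. \<forall>y\<in>lieX.
        T (nc_mult x a) y = nc_diff (T x (T a y)) (T (T x a) y))
   \<and> (\<forall>a\<in>U. \<forall>b\<in>U. \<forall>c\<in>U.
        T a (nc_mult b c) = sweedler2 a (\<lambda>u v. nc_mult (T (basis u) b) (T (basis v) c)))"

text \<open>Grossman--Larson product  A \<circledast> B = A_(1) (A_(2) \<triangleright> B).\<close>
definition gl :: "(ncpoly \<Rightarrow> ncpoly \<Rightarrow> ncpoly) \<Rightarrow> ncpoly \<Rightarrow> ncpoly \<Rightarrow> ncpoly" where
  "gl T A B = sweedler2 A (\<lambda>u v. nc_mult (basis u) (T (basis v) B))"

fun word_of :: "nat list \<Rightarrow> word" where
  "word_of [] = []"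
| "word_of [k] = replicate k X0"
| "word_of (k # k' # ks) = replicate k X0 @ X1 # word_of (k' # ks)"

text \<open>For a decomposition p0 \<otimes> ... \<otimes> p(2d), the term
  p0 x0^k1 S(p1) x1 p2 x0^k2 S(p3) x1 ... p(2d) x0^k(d+1) as (sign, word), using
  S(w) = (-1)^|w| rev w.\<close>
fun rterm :: "nat list \<Rightarrow> word list \<Rightarrow> rat \<times> word" where
  "rterm [k] [a] = (1, a @ replicate k X0)"
| "rterm (k # k' # ks) (a # b # ps) =
     (case rterm (k' # ks) ps of (s, r) \<Rightarrow>
        ((-1) ^ length b * s, a @ replicate k X0 @ rev b @ [X1] @ r))"
| "rterm _ _ = (0, [])"

definition rhs :: "ncpoly \<Rightarrow> nat list \<Rightarrow> ncpoly" where
  "rhs A ks = nc_sum (\<lambda>w. nc_smult (A w)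
      (nc_sum_list (map (\<lambda>ps. case rterm ks ps of (s, r) \<Rightarrow> nc_smult s (basis r))
                        (deco (2 * (length ks - 1)) w)))) (supp A)"

end

theory Submission
  imports Defs "HOL-Library.Function_Algebras"
begin

(* Both sides are linear in A, and by the Sweedler form of the Grossman-Larson product it suffices
   to compute u \<triangleright> w for basis words u, w. The rule A \<triangleright> BC = (A_(1) \<triangleright> B)(A_(2) \<triangleright> C) reduces this
   to the two letters, for which
     u \<triangleright> x0 = \<epsilon>(u) x0   and   u \<triangleright> x1 = S(u_(1)) x1 u_(2).
   Both follow from one uniqueness argument: words are products of elements of f_X, and the rule
   (f A) \<triangleright> y = f \<triangleright> (A \<triangleright> y) - (f \<triangleright> A) \<triangleright> y, together with f \<triangleright> - being a derivation that preserves
   f_X, determines A \<triangleright> y from 1 \<triangleright> y = y; so it suffices that the candidate value obeys the same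
   recursion. For x1 this uses that, for primitive f, f \<triangleright> - is a coderivation commuting with S.
   Splitting w at its letters x1 and using coassociativity of the coproduct then produces the
   alternating pattern A_(1) x0^k1 S(A_(2)) x1 A_(3) ... *)

notation nc_mult (infixl "\<odot>" 70)

declare plus_fun_apply[simp del] zero_fun_apply[simp del] uminus_apply[simp del] minus_apply[simp del]

lemma nc_smult_apply: "nc_smult c a w = c * a w"
  by (simp add: nc_smult_def)

lemmas ncpoly_apply = plus_fun_apply zero_fun_apply uminus_apply minus_apply nc_smult_apply

lemma sum_apply: "(sum F I) w = (\<Sum>i\<in>I. F i w)"
  by (induction I rule: infinite_finite_induct) (auto simp: ncpoly_apply)

lemma sum_list_apply: "(sum_list xs) w = sum_list (map (\<lambda>a. a w) xs)"
  by (induction xs) (auto simp: ncpoly_apply)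

lemma nc_add_eq[simp]: "nc_add a b = a + b" by (auto simp: nc_add_def ncpoly_apply)
lemma nc_diff_eq[simp]: "nc_diff a b = a - b" by (auto simp: nc_diff_def ncpoly_apply)
lemma nc_zero_eq[simp]: "nc_zero = 0" by (auto simp: nc_zero_def ncpoly_apply)
lemma nc_sum_eq[simp]: "nc_sum F I = sum F I" by (auto simp: nc_sum_def sum_apply)
lemma nc_sum_list_eq[simp]: "nc_sum_list xs = sum_list xs" by (auto simp: nc_sum_list_def sum_list_apply)
lemma nc_one_eq[simp]: "nc_one = basis []" by (simp add: nc_one_def)
lemma bracket_eq: "bracket a b = a \<odot> b - b \<odot> a" by (simp add: bracket_def)
lemma nc_smult_add_right: "nc_smult c (a + b) = nc_smult c a + nc_smult c b" by (auto simp: ncpoly_apply algebra_simps)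
lemma nc_smult_add_left: "nc_smult (c + d) a = nc_smult c a + nc_smult d a" by (auto simp: ncpoly_apply algebra_simps)
lemma nc_smult_diff_right: "nc_smult c (a - b) = nc_smult c a - nc_smult c b" by (auto simp: ncpoly_apply algebra_simps)
lemma nc_smult_nc_smult[simp]: "nc_smult c (nc_smult d a) = nc_smult (c*d) a" by (auto simp: ncpoly_apply)
lemma nc_smult_one[simp]: "nc_smult 1 a = a" by (auto simp: ncpoly_apply)
lemma nc_smult_zero_left[simp]: "nc_smult 0 a = 0" by (auto simp: ncpoly_apply)
lemma nc_smult_zero_right[simp]: "nc_smult c 0 = 0" by (auto simp: ncpoly_apply)
lemma nc_smult_minus_one: "nc_smult (-1) a = - a" by (auto simp: ncpoly_apply)

lemma nc_smult_sum: "nc_smult c (sum F I) = (\<Sum>i\<in>I. nc_smult c (F i))"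
  by (rule ext) (simp add: ncpoly_apply sum_apply sum_distrib_left)

lemma nc_smult_uminus: "nc_smult c (- a) = - nc_smult c a" by (auto simp: ncpoly_apply)

lemma nc_mult_apply: "(a \<odot> b) w = (\<Sum>i\<le>length w. a (take i w) * b (drop i w))"
  by (simp add: nc_mult_def)

lemma nc_mult_Nil[simp]: "(a \<odot> b) [] = a [] * b []" by (simp add: nc_mult_def)

lemma nc_mult_add_left: "(a + b) \<odot> c = a \<odot> c + b \<odot> c"
  by (rule ext) (simp add: ncpoly_apply nc_mult_apply algebra_simps sum.distrib)

lemma nc_mult_add_right: "c \<odot> (a + b) = c \<odot> a + c \<odot> b"
  by (rule ext) (simp add: ncpoly_apply nc_mult_apply algebra_simps sum.distrib)

lemma nc_mult_diff_left: "(a - b) \<odot> c = a \<odot> c - b \<odot> c"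
  by (rule ext) (simp add: ncpoly_apply nc_mult_apply algebra_simps sum_subtractf)

lemma nc_mult_diff_right: "c \<odot> (a - b) = c \<odot> a - c \<odot> b"
  by (rule ext) (simp add: ncpoly_apply nc_mult_apply algebra_simps sum_subtractf)

lemma nc_mult_uminus_left: "(- a) \<odot> c = - (a \<odot> c)"
  by (rule ext) (simp add: ncpoly_apply nc_mult_apply sum_negf)

lemma nc_mult_uminus_right: "c \<odot> (- a) = - (c \<odot> a)"
  by (rule ext) (simp add: ncpoly_apply nc_mult_apply sum_negf)

lemma nc_mult_smult_left: "(nc_smult r a) \<odot> c = nc_smult r (a \<odot> c)"
  by (rule ext) (simp add: ncpoly_apply nc_mult_apply sum_distrib_left mult.assoc)

lemma nc_mult_smult_right: "c \<odot> (nc_smult r a) = nc_smult r (c \<odot> a)"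
  by (rule ext) (simp add: ncpoly_apply nc_mult_apply sum_distrib_left algebra_simps)

lemma nc_mult_zero_left[simp]: "0 \<odot> c = 0" by (rule ext) (simp add: ncpoly_apply nc_mult_apply)
lemma nc_mult_zero_right[simp]: "c \<odot> 0 = 0" by (rule ext) (simp add: ncpoly_apply nc_mult_apply)

lemma nc_mult_sum_left: "(sum F I) \<odot> c = (\<Sum>i\<in>I. F i \<odot> c)"
  by (rule ext) (simp add: ncpoly_apply nc_mult_apply sum_apply sum_distrib_right sum.swap[of _ I])

lemma nc_mult_sum_right: "c \<odot> (sum F I) = (\<Sum>i\<in>I. c \<odot> F i)"
  by (rule ext) (simp add: ncpoly_apply nc_mult_apply sum_apply sum_distrib_left sum.swap[of _ I])

lemma nc_mult_sum_list_right: "c \<odot> (sum_list xs) = sum_list (map (\<lambda>x. c \<odot> x) xs)"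
  by (induction xs) (simp_all only: sum_list.Nil sum_list.Cons list.map nc_mult_zero_right nc_mult_add_right)

lemma basis_apply: "basis u w = (if w = u then 1 else 0)" by (simp add: basis_def)

lemma basis_Nil_apply: "basis u [] = (if u = [] then 1 else 0)"
  by (simp add: basis_apply)

lemma take_drop_iff: "i \<le> length w \<Longrightarrow> (take i w = u \<and> drop i w = v) \<longleftrightarrow> (i = length u \<and> w = u @ v)"
  by (metis append_eq_conv_conj append_take_drop_id length_take min.absorb2)

lemma basis_mult_basis[simp]: "basis u \<odot> basis v = basis (u @ v)"
proof (rule ext)
  fix w
  have "(basis u \<odot> basis v) w = (\<Sum>i\<le>length w. if i = length u \<and> w = u @ v then 1 else 0)"
    unfolding nc_mult_apply basis_apply
    by (rule sum.cong) (auto simp: take_drop_iff)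
  also have "\<dots> = basis (u @ v) w"
    by (auto simp: basis_apply sum.delta)
  finally show "(basis u \<odot> basis v) w = basis (u @ v) w" .
qed

lemma U_iff: "a \<in> U \<longleftrightarrow> finite {w. a w \<noteq> 0}" by (simp add: U_def)
lemma supp_iff: "w \<in> supp a \<longleftrightarrow> a w \<noteq> 0" by (simp add: supp_def)
lemma finite_supp: "a \<in> U \<Longrightarrow> finite (supp a)" by (simp add: U_def supp_def)
lemma supp_basis: "supp (basis u) = {u}" by (auto simp: supp_iff basis_apply split: if_splits)

lemma basis_in_U[simp,intro]: "basis u \<in> U"
proof -
  have "{w. basis u w \<noteq> 0} = {u}" by (auto simp: basis_apply split: if_splits)
  thus ?thesis by (simp add: U_iff)
qed

lemma zero_in_U[simp,intro]: "0 \<in> U" by (simp add: U_iff ncpoly_apply)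

lemma add_in_U[simp,intro]: "a \<in> U \<Longrightarrow> b \<in> U \<Longrightarrow> a + b \<in> U"
  unfolding U_iff by (rule finite_subset[of _ "{w. a w \<noteq> 0} \<union> {w. b w \<noteq> 0}"]) (auto simp: ncpoly_apply)

lemma uminus_in_U[simp,intro]: "a \<in> U \<Longrightarrow> - a \<in> U"
  unfolding U_iff by (auto simp: ncpoly_apply)

lemma diff_in_U[simp,intro]: "a \<in> U \<Longrightarrow> b \<in> U \<Longrightarrow> a - b \<in> U"
  unfolding U_iff by (rule finite_subset[of _ "{w. a w \<noteq> 0} \<union> {w. b w \<noteq> 0}"]) (auto simp: ncpoly_apply)

lemma smult_in_U[simp,intro]: "a \<in> U \<Longrightarrow> nc_smult c a \<in> U"
  unfolding U_iff by (rule finite_subset[of _ "{w. a w \<noteq> 0}"]) (auto simp: ncpoly_apply)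

lemma sum_in_U[simp,intro]: "(\<And>i. i \<in> I \<Longrightarrow> F i \<in> U) \<Longrightarrow> sum F I \<in> U"
  by (induction I rule: infinite_finite_induct) auto

lemma sum_list_in_U[intro]: "(\<And>x. x \<in> set xs \<Longrightarrow> x \<in> U) \<Longrightarrow> sum_list xs \<in> U"
  by (induction xs) auto

lemma nc_mult_in_U[simp,intro]: "a \<in> U \<Longrightarrow> b \<in> U \<Longrightarrow> a \<odot> b \<in> U"
proof -
  assume a: "a \<in> U" and b: "b \<in> U"
  have "{w. (a \<odot> b) w \<noteq> 0} \<subseteq> (\<lambda>(u,v). u @ v) ` ({w. a w \<noteq> 0} \<times> {w. b w \<noteq> 0})"
  proof
    fix w assume "w \<in> {w. (a \<odot> b) w \<noteq> 0}"
    then obtain i where "a (take i w) * b (drop i w) \<noteq> 0"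
      by (auto simp: nc_mult_apply elim: sum.not_neutral_contains_not_neutral)
    thus "w \<in> (\<lambda>(u,v). u @ v) ` ({w. a w \<noteq> 0} \<times> {w. b w \<noteq> 0})"
      by (auto intro!: image_eqI[of _ _ "(take i w, drop i w)"])
  qed
  thus ?thesis using a b unfolding U_iff by (auto intro: finite_subset)
qed

lemma lieX_in_U: "f \<in> lieX \<Longrightarrow> f \<in> U"
  by (induction rule: lieX.induct) (auto simp: bracket_eq)

lemma lieX_add: "a \<in> lieX \<Longrightarrow> b \<in> lieX \<Longrightarrow> a + b \<in> lieX"
  using lieX.add by fastforce

lemma lieX_smult: "a \<in> lieX \<Longrightarrow> nc_smult c a \<in> lieX"
  using lieX.smult by fastforce

lemma lieX_bracket: "a \<in> lieX \<Longrightarrow> b \<in> lieX \<Longrightarrow> bracket a b \<in> lieX"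
  using lieX.brk by fastforce

lemma lieX_zero: "0 \<in> lieX"
  using lieX_smult[OF lieX.gen0, of 0] by simp

lemma lieX_letter: "basis [c] \<in> lieX"
  by (cases c) (auto intro: lieX.intros)

lemma lieX_Nil: "f \<in> lieX \<Longrightarrow> f [] = 0"
  by (induction rule: lieX.induct) (auto simp: basis_apply ncpoly_apply bracket_eq)

section \<open>Linear extension from the basis of words\<close>

definition lin_ext :: "(word \<Rightarrow> ncpoly) \<Rightarrow> ncpoly \<Rightarrow> ncpoly" where
  "lin_ext X a = (\<Sum>w\<in>supp a. nc_smult (a w) (X w))"

lemma lin_ext_superset: "finite W \<Longrightarrow> supp a \<subseteq> W \<Longrightarrow> lin_ext X a = (\<Sum>w\<in>W. nc_smult (a w) (X w))"
  unfolding lin_ext_def by (rule sum.mono_neutral_left) (auto simp: supp_iff)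

lemma lin_ext_basis[simp]: "lin_ext X (basis u) = X u"
  by (simp add: lin_ext_def supp_basis basis_apply)

lemma lin_ext_add: "a \<in> U \<Longrightarrow> b \<in> U \<Longrightarrow> lin_ext X (a + b) = lin_ext X a + lin_ext X b"
proof -
  assume a: "a \<in> U" and b: "b \<in> U"
  let ?W = "supp a \<union> supp b"
  have f: "finite ?W" using a b by (simp add: finite_supp)
  have "lin_ext X (a + b) = (\<Sum>w\<in>?W. nc_smult ((a+b) w) (X w))"
    by (rule lin_ext_superset[OF f]) (auto simp: supp_iff ncpoly_apply)
  also have "\<dots> = (\<Sum>w\<in>?W. nc_smult (a w) (X w)) + (\<Sum>w\<in>?W. nc_smult (b w) (X w))"
    by (simp add: nc_smult_add_left sum.distrib ncpoly_apply)
  also have "\<dots> = lin_ext X a + lin_ext X b"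
    by (simp add: lin_ext_superset[OF f])
  finally show ?thesis .
qed

lemma lin_ext_smult: "a \<in> U \<Longrightarrow> lin_ext X (nc_smult c a) = nc_smult c (lin_ext X a)"
proof -
  assume a: "a \<in> U"
  have f: "finite (supp a)" using a by (simp add: finite_supp)
  have "lin_ext X (nc_smult c a) = (\<Sum>w\<in>supp a. nc_smult (nc_smult c a w) (X w))"
    by (rule lin_ext_superset[OF f]) (auto simp: supp_iff ncpoly_apply)
  thus ?thesis by (simp add: lin_ext_def nc_smult_sum ncpoly_apply)
qed

lemma lin_ext_zero[simp]: "lin_ext X 0 = 0" by (simp add: lin_ext_def supp_def ncpoly_apply)

lemma lin_ext_uminus: "a \<in> U \<Longrightarrow> lin_ext X (- a) = - lin_ext X a"
  using lin_ext_smult[of a X "-1"] by (simp add: nc_smult_minus_one)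

lemma lin_ext_diff: "a \<in> U \<Longrightarrow> b \<in> U \<Longrightarrow> lin_ext X (a - b) = lin_ext X a - lin_ext X b"
  using lin_ext_add[of a "-b" X] lin_ext_uminus[of b X] by simp

lemma lin_ext_add_fun: "lin_ext (\<lambda>w. X w + Y w) a = lin_ext X a + lin_ext Y a"
  by (simp add: lin_ext_def nc_smult_add_right sum.distrib)


lemma lin_ext_mult_left: "lin_ext (\<lambda>w. P \<odot> X w) a = P \<odot> lin_ext X a"
  by (simp add: lin_ext_def nc_mult_sum_right nc_mult_smult_right)

lemma lin_ext_mult_right: "lin_ext (\<lambda>w. X w \<odot> P) a = lin_ext X a \<odot> P"
  by (simp add: lin_ext_def nc_mult_sum_left nc_mult_smult_left)

lemma lin_ext_apply: "lin_ext X a v = (\<Sum>w\<in>supp a. a w * X w v)"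
  by (simp add: lin_ext_def sum_apply ncpoly_apply)

lemma lin_ext_basis_decomp: "a \<in> U \<Longrightarrow> lin_ext basis a = a"
proof (rule ext)
  fix v assume a: "a \<in> U"
  have "lin_ext basis a v = (\<Sum>w\<in>supp a. if w = v then a w else 0)"
    unfolding lin_ext_apply basis_apply by (rule sum.cong) auto
  also have "\<dots> = a v" using a by (simp add: finite_supp sum.delta' supp_iff)
  finally show "lin_ext basis a v = a v" .
qed

lemma lin_ext_in_U[simp,intro]: "(\<And>w. X w \<in> U) \<Longrightarrow> lin_ext X a \<in> U"
  by (simp add: lin_ext_def sum_in_U)

(* T is only assumed to be linear on U, so linearity is relativised to U. *)
definition U_linear :: "(ncpoly \<Rightarrow> ncpoly) \<Rightarrow> bool" where
  "U_linear L \<longleftrightarrow> (\<forall>a\<in>U. \<forall>b\<in>U. L (a + b) = L a + L b) \<and> (\<forall>a\<in>U. \<forall>c. L (nc_smult c a) = nc_smult c (L a))"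

lemma U_linearI: "(\<And>a b. a \<in> U \<Longrightarrow> b \<in> U \<Longrightarrow> L (a + b) = L a + L b) \<Longrightarrow>
   (\<And>a c. a \<in> U \<Longrightarrow> L (nc_smult c a) = nc_smult c (L a)) \<Longrightarrow> U_linear L"
  by (auto simp: U_linear_def)

lemma U_linear_add: "U_linear L \<Longrightarrow> a \<in> U \<Longrightarrow> b \<in> U \<Longrightarrow> L (a + b) = L a + L b"
  by (auto simp: U_linear_def)

lemma U_linear_smult: "U_linear L \<Longrightarrow> a \<in> U \<Longrightarrow> L (nc_smult c a) = nc_smult c (L a)"
  by (auto simp: U_linear_def)

lemma U_linear_zero: "U_linear L \<Longrightarrow> L 0 = 0"
  using U_linear_smult[of L 0 0] by simp

lemma U_linear_uminus: "U_linear L \<Longrightarrow> a \<in> U \<Longrightarrow> L (- a) = - L a"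
  using U_linear_smult[of L a "-1"] by (simp add: nc_smult_minus_one)

lemma U_linear_diff: "U_linear L \<Longrightarrow> a \<in> U \<Longrightarrow> b \<in> U \<Longrightarrow> L (a - b) = L a - L b"
  using U_linear_add[of L a "-b"] U_linear_uminus[of L b] by simp

lemma U_linear_sum: "U_linear L \<Longrightarrow> (\<And>i. i \<in> I \<Longrightarrow> F i \<in> U) \<Longrightarrow> L (sum F I) = (\<Sum>i\<in>I. L (F i))"
proof (induction I rule: infinite_finite_induct)
  case (infinite A) thus ?case by (simp add: U_linear_zero)
next
  case empty thus ?case by (simp add: U_linear_zero)
next
  case (insert x F) thus ?case by (simp add: U_linear_add sum_in_U)
qed

lemma U_linear_sum_list: "U_linear L \<Longrightarrow> (\<And>x. x \<in> set xs \<Longrightarrow> F x \<in> U) \<Longrightarrow> L (sum_list (map F xs)) = sum_list (map (\<lambda>x. L (F x)) xs)"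
proof (induction xs)
  case Nil thus ?case by (simp add: U_linear_zero)
next
  case (Cons x xs)
  have "sum_list (map F xs) \<in> U" using Cons.prems by (auto intro!: sum_list_in_U)
  thus ?case using Cons by (simp add: U_linear_add)
qed

lemma U_linear_lin_ext_commute: "U_linear L \<Longrightarrow> (\<And>w. X w \<in> U) \<Longrightarrow> L (lin_ext X a) = lin_ext (\<lambda>w. L (X w)) a"
  unfolding lin_ext_def by (simp add: U_linear_sum U_linear_smult)

lemma U_linear_eq_lin_ext: "U_linear L \<Longrightarrow> a \<in> U \<Longrightarrow> L a = lin_ext (\<lambda>w. L (basis w)) a"
  using U_linear_lin_ext_commute[of L basis a] by (simp add: lin_ext_basis_decomp)

lemma U_linear_lin_ext: "U_linear (lin_ext X)"
  by (rule U_linearI) (simp_all add: lin_ext_add lin_ext_smult)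

lemma U_linear_mult_left: "U_linear (\<lambda>x. P \<odot> x)"
  by (rule U_linearI) (simp_all add: nc_mult_add_right nc_mult_smult_right)

lemma U_linear_comp: "U_linear L \<Longrightarrow> U_linear M \<Longrightarrow> (\<And>a. a \<in> U \<Longrightarrow> M a \<in> U) \<Longrightarrow> U_linear (\<lambda>x. L (M x))"
  by (rule U_linearI) (simp_all add: U_linear_add U_linear_smult)

lemma U_linear_add_fun: "U_linear L \<Longrightarrow> U_linear M \<Longrightarrow> U_linear (\<lambda>x. L x + M x)"
  by (rule U_linearI) (simp_all add: U_linear_add U_linear_smult nc_smult_add_right)

lemma U_linear_diff_fun: "U_linear L \<Longrightarrow> U_linear M \<Longrightarrow> U_linear (\<lambda>x. L x - M x)"
  by (rule U_linearI) (simp_all add: U_linear_add U_linear_smult nc_smult_diff_right)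

lemma lin_ext_swap: "a \<in> U \<Longrightarrow> b \<in> U \<Longrightarrow> lin_ext (\<lambda>u. lin_ext (\<lambda>v. Z u v) b) a = lin_ext (\<lambda>v. lin_ext (\<lambda>u. Z u v) a) b"
  unfolding lin_ext_def by (simp add: nc_smult_sum sum.swap[of _ "supp a"] mult.commute)

lemma nc_mult_eq_lin_ext: "g \<in> U \<Longrightarrow> h \<in> U \<Longrightarrow> g \<odot> h = lin_ext (\<lambda>u. lin_ext (\<lambda>v. basis (u @ v)) h) g"
proof -
  assume g: "g \<in> U" and h: "h \<in> U"
  have "g \<odot> h = lin_ext basis g \<odot> lin_ext basis h" using g h by (simp add: lin_ext_basis_decomp)
  also have "\<dots> = lin_ext (\<lambda>u. basis u \<odot> lin_ext basis h) g" by (simp add: lin_ext_mult_right)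
  also have "\<dots> = lin_ext (\<lambda>u. lin_ext (\<lambda>v. basis (u @ v)) h) g" by (simp add: lin_ext_mult_left[symmetric])
  finally show ?thesis .
qed

lemma lin_ext_nc_mult: "g \<in> U \<Longrightarrow> h \<in> U \<Longrightarrow> lin_ext Y (g \<odot> h) = lin_ext (\<lambda>u. lin_ext (\<lambda>v. Y (u @ v)) h) g"
proof -
  assume g: "g \<in> U" and h: "h \<in> U"
  have "lin_ext Y (g \<odot> h) = lin_ext Y (lin_ext (\<lambda>u. lin_ext (\<lambda>v. basis (u @ v)) h) g)" using g h by (simp add: nc_mult_eq_lin_ext)
  also have "\<dots> = lin_ext (\<lambda>u. lin_ext Y (lin_ext (\<lambda>v. basis (u @ v)) h)) g"
    by (rule U_linear_lin_ext_commute[OF U_linear_lin_ext]) auto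
  also have "\<dots> = lin_ext (\<lambda>u. lin_ext (\<lambda>v. Y (u @ v)) h) g"
    by (subst U_linear_lin_ext_commute[OF U_linear_lin_ext]) auto
  finally show ?thesis .
qed

lemma lin_ext_mult_basis_right: "g \<in> U \<Longrightarrow> lin_ext Y (g \<odot> basis p) = lin_ext (\<lambda>u. Y (u @ p)) g"
  by (simp add: lin_ext_nc_mult)

lemma lin_ext_basis_mult_left: "h \<in> U \<Longrightarrow> lin_ext Y (basis p \<odot> h) = lin_ext (\<lambda>v. Y (p @ v)) h"
  by (simp add: lin_ext_nc_mult)

lemma basis_mult_basis_mult: "c \<in> U \<Longrightarrow> basis u \<odot> (basis v \<odot> c) = basis (u @ v) \<odot> c"
proof -
  assume c: "c \<in> U"
  have "basis u \<odot> (basis v \<odot> lin_ext basis c) = basis (u @ v) \<odot> lin_ext basis c"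
    by (simp add: lin_ext_mult_left[symmetric])
  thus ?thesis using c by (simp add: lin_ext_basis_decomp)
qed

lemma nc_mult_assoc: "a \<in> U \<Longrightarrow> b \<in> U \<Longrightarrow> c \<in> U \<Longrightarrow> (a \<odot> b) \<odot> c = a \<odot> (b \<odot> c)"
proof -
  assume a: "a \<in> U" and b: "b \<in> U" and c: "c \<in> U"
  have "(a \<odot> b) \<odot> c = lin_ext (\<lambda>w. basis w \<odot> c) (a \<odot> b)"
    by (subst lin_ext_basis_decomp[symmetric, of "a \<odot> b"]) (use a b in \<open>auto simp: lin_ext_mult_right\<close>)
  also have "\<dots> = lin_ext (\<lambda>u. lin_ext (\<lambda>v. basis u \<odot> (basis v \<odot> c)) b) a"
    using a b c by (simp add: lin_ext_nc_mult basis_mult_basis_mult)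
  also have "\<dots> = lin_ext (\<lambda>u. basis u \<odot> lin_ext (\<lambda>v. (basis v \<odot> c)) b) a"
    by (simp add: lin_ext_mult_left)
  also have "\<dots> = lin_ext (\<lambda>u. basis u \<odot> (b \<odot> c)) a"
    using b by (simp add: lin_ext_mult_right lin_ext_basis_decomp)
  also have "\<dots> = a \<odot> (b \<odot> c)" using a by (simp add: lin_ext_mult_right lin_ext_basis_decomp)
  finally show ?thesis .
qed

lemma nc_mult_one_left[simp]: "a \<in> U \<Longrightarrow> basis [] \<odot> a = a"
proof -
  assume a: "a \<in> U"
  have "basis [] \<odot> lin_ext basis a = lin_ext basis a" by (simp add: lin_ext_mult_left[symmetric])
  thus ?thesis using a by (simp add: lin_ext_basis_decomp)
qed


definition nc_prod_list :: "ncpoly list \<Rightarrow> ncpoly" where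
  "nc_prod_list gs = foldr (\<odot>) gs (basis [])"

lemma nc_prod_list_Nil[simp]: "nc_prod_list [] = basis []" by (simp add: nc_prod_list_def)
lemma nc_prod_list_Cons[simp]: "nc_prod_list (g # gs) = g \<odot> nc_prod_list gs" by (simp add: nc_prod_list_def)

lemma nc_prod_list_in_U: "set gs \<subseteq> U \<Longrightarrow> nc_prod_list gs \<in> U"
  by (induction gs) auto

lemma nc_prod_list_append: "set xs \<subseteq> U \<Longrightarrow> set ys \<subseteq> U \<Longrightarrow> nc_prod_list (xs @ ys) = nc_prod_list xs \<odot> nc_prod_list ys"
  by (induction xs) (auto simp: nc_mult_assoc nc_prod_list_in_U)

lemma basis_eq_nc_prod_list: "basis w = nc_prod_list (map (\<lambda>c. basis [c]) w)"
proof (induction w)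
  case (Cons c w)
  have "basis (c # w) = basis [c] \<odot> basis w" by simp
  thus ?case using Cons by simp
qed simp

section \<open>Sums over the shuffle coproduct\<close>

(* cop_sum X w = \<Sum> X w_(1) w_(2) over the shuffle coproduct of w; an identity
   lin_ext (cop_sum X) a = ... for all X is thus an identity about the coproduct of a. *)
definition cop_sum :: "(word \<Rightarrow> word \<Rightarrow> ncpoly) \<Rightarrow> word \<Rightarrow> ncpoly" where
  "cop_sum X w = sum_list (map (\<lambda>pq. X (fst pq) (snd pq)) (cop w))"

lemma cop_sum_Nil[simp]: "cop_sum X [] = X [] []" by (simp add: cop_sum_def)

lemma cop_sum_Cons[simp]: "cop_sum X (c # w) = cop_sum (\<lambda>p q. X (c # p) q) w + cop_sum (\<lambda>p q. X p (c # q)) w"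
  by (simp add: cop_sum_def comp_def case_prod_beta)

lemma cop_sum_add: "cop_sum (\<lambda>p q. X p q + Y p q) w = cop_sum X w + cop_sum Y w"
  by (simp add: cop_sum_def sum_list_addf)

lemma cop_sum_zero[simp]: "cop_sum (\<lambda>p q. 0) w = 0"
  by (simp add: cop_sum_def)

lemma cop_sum_mult_left: "cop_sum (\<lambda>p q. P \<odot> X p q) w = P \<odot> cop_sum X w"
  by (induction w arbitrary: X) (simp_all add: nc_mult_add_right)

lemma cop_sum_mult_right: "cop_sum (\<lambda>p q. X p q \<odot> P) w = cop_sum X w \<odot> P"
  by (induction w arbitrary: X) (simp_all add: nc_mult_add_left)

lemma cop_sum_in_U[intro]: "(\<And>p q. X p q \<in> U) \<Longrightarrow> cop_sum X w \<in> U"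
  by (induction w arbitrary: X) simp_all

lemma cop_sum_cong: "(\<And>p q. X p q = Y p q) \<Longrightarrow> cop_sum X w = cop_sum Y w"
  by (metis ext)

lemma cop_sum_append: "cop_sum X (u @ v) = cop_sum (\<lambda>p1 q1. cop_sum (\<lambda>p2 q2. X (p1 @ p2) (q1 @ q2)) v) u"
  by (induction u arbitrary: X) simp_all

lemma cop_sum_coassoc:
  "cop_sum (\<lambda>u r. cop_sum (\<lambda>p q. Y p q r) u) w = cop_sum (\<lambda>p v. cop_sum (\<lambda>q r. Y p q r) v) w"
  by (induction w arbitrary: Y) (simp_all add: cop_sum_add add_ac)

lemma cop_sum_counit_left: "cop_sum (\<lambda>p q. if p = [] then Y q else 0) v = Y v"
  by (induction v arbitrary: Y) simp_all

lemma cop_sum_counit_right: "cop_sum (\<lambda>p q. if q = [] then Y p else 0) v = Y v"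
  by (induction v arbitrary: Y) simp_all

lemma lin_ext_cop_sum: "lin_ext (\<lambda>w. cop_sum (Z w) u) a = cop_sum (\<lambda>p q. lin_ext (\<lambda>w. Z w p q) a) u"
  by (induction u arbitrary: Z) (simp_all add: lin_ext_add_fun)

lemma U_linear_cop_sum: "U_linear L \<Longrightarrow> (\<And>p q. X p q \<in> U) \<Longrightarrow> L (cop_sum X w) = cop_sum (\<lambda>p q. L (X p q)) w"
  unfolding cop_sum_def by (subst U_linear_sum_list) auto

lemma sweedler2_eq: "sweedler2 A F = lin_ext (cop_sum F) A"
  by (simp add: sweedler2_def lin_ext_def cop_sum_def split_def)

lemma gl_eq_lin_ext: "gl T A C = lin_ext (cop_sum (\<lambda>u v. basis u \<odot> T (basis v) C)) A"
  by (simp add: gl_def sweedler2_eq)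

section \<open>Primitive elements\<close>

definition primitive :: "ncpoly \<Rightarrow> bool" where
  "primitive f \<longleftrightarrow> (\<forall>X. lin_ext (cop_sum X) f = lin_ext (\<lambda>u. X u [] + X [] u) f)"

lemma primitiveD: "primitive f \<Longrightarrow> lin_ext (cop_sum X) f = lin_ext (\<lambda>u. X u [] + X [] u) f"
  by (simp add: primitive_def)

lemma primitive_mult_cop_sum:
  assumes g: "g \<in> U" "primitive g" and h: "h \<in> U" "primitive h"
  shows "lin_ext (cop_sum X) (g \<odot> h) = lin_ext (\<lambda>u. lin_ext (\<lambda>v. X (u @ v) [] + X u v + X v u + X [] (u @ v)) h) g"
proof -
  have "lin_ext (cop_sum X) (g \<odot> h) = lin_ext (\<lambda>u. lin_ext (\<lambda>v. cop_sum X (u @ v)) h) g"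
    using g h by (simp add: lin_ext_nc_mult)
  also have "\<dots> = lin_ext (\<lambda>u. lin_ext (\<lambda>v. cop_sum (\<lambda>p1 q1. cop_sum (\<lambda>p2 q2. X (p1 @ p2) (q1 @ q2)) v) u) h) g"
    by (simp add: cop_sum_append)
  also have "\<dots> = lin_ext (\<lambda>u. cop_sum (\<lambda>p1 q1. lin_ext (\<lambda>v. cop_sum (\<lambda>p2 q2. X (p1 @ p2) (q1 @ q2)) v) h) u) g"
    by (simp add: lin_ext_cop_sum)
  also have "\<dots> = lin_ext (\<lambda>u. lin_ext (\<lambda>v. cop_sum (\<lambda>p2 q2. X (u @ p2) q2) v) h + lin_ext (\<lambda>v. cop_sum (\<lambda>p2 q2. X p2 (u @ q2)) v) h) g"
    using primitiveD[OF g(2)] by simp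
  also have "\<dots> = lin_ext (\<lambda>u. lin_ext (\<lambda>v. X (u @ v) [] + X u v) h + lin_ext (\<lambda>v. X v u + X [] (u @ v)) h) g"
    using primitiveD[OF h(2)] by simp
  also have "\<dots> = lin_ext (\<lambda>u. lin_ext (\<lambda>v. X (u @ v) [] + X u v + X v u + X [] (u @ v)) h) g"
    by (simp add: lin_ext_add_fun[symmetric] add.assoc)
  finally show ?thesis .
qed

lemma primitive_bracket:
  assumes g: "g \<in> U" "primitive g" and h: "h \<in> U" "primitive h"
  shows "primitive (bracket g h)"
  unfolding primitive_def
proof
  fix X
  have sw: "lin_ext (\<lambda>u. lin_ext (\<lambda>v. X u v + X v u) h) g = lin_ext (\<lambda>u. lin_ext (\<lambda>v. X u v + X v u) g) h"
    using g h by (subst lin_ext_swap) (simp_all add: add.commute)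
  have e1: "lin_ext (cop_sum X) (g \<odot> h) = lin_ext (\<lambda>u. lin_ext (\<lambda>v. X (u @ v) [] + X [] (u @ v)) h) g + lin_ext (\<lambda>u. lin_ext (\<lambda>v. X u v + X v u) h) g"
    using primitive_mult_cop_sum[OF g h, of X] by (simp add: lin_ext_add_fun[symmetric] add_ac)
  have e2: "lin_ext (cop_sum X) (h \<odot> g) = lin_ext (\<lambda>u. lin_ext (\<lambda>v. X (u @ v) [] + X [] (u @ v)) g) h + lin_ext (\<lambda>u. lin_ext (\<lambda>v. X u v + X v u) g) h"
    using primitive_mult_cop_sum[OF h g, of X] by (simp add: lin_ext_add_fun[symmetric] add_ac)
  have e3: "lin_ext (\<lambda>u. X u [] + X [] u) (g \<odot> h) = lin_ext (\<lambda>u. lin_ext (\<lambda>v. X (u @ v) [] + X [] (u @ v)) h) g"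
    using g h by (simp add: lin_ext_nc_mult)
  have e4: "lin_ext (\<lambda>u. X u [] + X [] u) (h \<odot> g) = lin_ext (\<lambda>u. lin_ext (\<lambda>v. X (u @ v) [] + X [] (u @ v)) g) h"
    using g h by (simp add: lin_ext_nc_mult)
  show "lin_ext (cop_sum X) (bracket g h) = lin_ext (\<lambda>u. X u [] + X [] u) (bracket g h)"
    using g h by (simp add: bracket_eq lin_ext_diff e1 e2 e3 e4 sw)
qed

lemma lieX_primitive: "f \<in> lieX \<Longrightarrow> primitive f"
proof (induction rule: lieX.induct)
  case gen0 thus ?case by (simp add: primitive_def)
next
  case gen1 thus ?case by (simp add: primitive_def)
next
  case (add a b) thus ?case by (simp add: primitive_def lin_ext_add lieX_in_U)
next
  case (smult a c) thus ?case by (simp add: primitive_def lin_ext_smult lieX_in_U)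
next
  case (brk a b) thus ?case by (simp add: primitive_bracket lieX_in_U)
qed

lemma primitive_cop_sum_append:
  assumes "primitive g"
  shows "lin_ext (\<lambda>u. cop_sum X (u @ w)) g =
    cop_sum (\<lambda>p q. lin_ext (\<lambda>u. X (u @ p) q) g + lin_ext (\<lambda>u. X p (u @ q)) g) w"
proof -
  have "lin_ext (\<lambda>u. cop_sum X (u @ w)) g
      = lin_ext (cop_sum (\<lambda>p1 q1. cop_sum (\<lambda>p2 q2. X (p1 @ p2) (q1 @ q2)) w)) g"
    by (simp add: cop_sum_append)
  also have "\<dots> = lin_ext (\<lambda>u. cop_sum (\<lambda>p2 q2. X (u @ p2) q2) w + cop_sum (\<lambda>p2 q2. X p2 (u @ q2)) w) g"
    by (simp add: primitiveD[OF assms])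
  also have "\<dots> = cop_sum (\<lambda>p q. lin_ext (\<lambda>u. X (u @ p) q) g + lin_ext (\<lambda>u. X p (u @ q)) g) w"
    by (simp add: cop_sum_add[symmetric] lin_ext_cop_sum lin_ext_add_fun)
  finally show ?thesis .
qed

definition antipode :: "ncpoly \<Rightarrow> ncpoly" where
  "antipode a = lin_ext (\<lambda>u. nc_smult ((-1) ^ length u) (basis (rev u))) a"

lemma antipode_basis: "antipode (basis u) = nc_smult ((-1) ^ length u) (basis (rev u))"
  by (simp add: antipode_def)

lemma antipode_in_U[simp,intro]: "antipode a \<in> U"
  by (simp add: antipode_def lin_ext_in_U)

lemma U_linear_antipode: "U_linear antipode"
  unfolding antipode_def by (rule U_linear_lin_ext)

lemma lin_ext_antipode: "lin_ext (\<lambda>u. antipode (basis u)) a = antipode a"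
  by (simp add: antipode_def)

lemma antipode_nc_mult: "a \<in> U \<Longrightarrow> b \<in> U \<Longrightarrow> antipode (a \<odot> b) = antipode b \<odot> antipode a"
proof -
  assume a: "a \<in> U" and b: "b \<in> U"
  have "antipode (a \<odot> b) = lin_ext (\<lambda>u. lin_ext (\<lambda>v. antipode (basis (u @ v))) b) a"
    using a b by (simp add: antipode_def lin_ext_nc_mult)
  also have "\<dots> = lin_ext (\<lambda>u. lin_ext (\<lambda>v. antipode (basis v) \<odot> antipode (basis u)) b) a"
    by (simp add: antipode_basis nc_mult_smult_left nc_mult_smult_right power_add mult.commute)
  also have "\<dots> = antipode b \<odot> antipode a"
    by (simp add: lin_ext_mult_right lin_ext_mult_left lin_ext_antipode)
  finally show ?thesis .
qed

lemma antipode_lieX: "f \<in> lieX \<Longrightarrow> antipode f = - f"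
proof (induction rule: lieX.induct)
  case gen0 thus ?case by (simp add: antipode_basis nc_smult_minus_one)
next
  case gen1 thus ?case by (simp add: antipode_basis nc_smult_minus_one)
next
  case (add a b) thus ?case using lieX_in_U by (simp add: antipode_def lin_ext_add)
next
  case (smult a c) thus ?case using lieX_in_U by (simp add: antipode_def lin_ext_smult nc_smult_uminus)
next
  case (brk a b)
  hence aU: "a \<in> U" and bU: "b \<in> U" using lieX_in_U by auto
  show ?case using brk aU bU
    by (simp add: bracket_eq antipode_def[symmetric] U_linear_diff[OF U_linear_antipode] antipode_nc_mult nc_mult_uminus_left nc_mult_uminus_right)
qed

definition rterm_poly :: "nat list \<Rightarrow> word list \<Rightarrow> ncpoly" where
  "rterm_poly ks ps = (case rterm ks ps of (s, r) \<Rightarrow> nc_smult s (basis r))"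

definition rhs_word :: "nat list \<Rightarrow> word \<Rightarrow> ncpoly" where
  "rhs_word ks w = sum_list (map (rterm_poly ks) (deco (2 * (length ks - 1)) w))"

lemma rhs_eq_lin_ext: "rhs A ks = lin_ext (rhs_word ks) A"
  by (simp add: rhs_def lin_ext_def rhs_word_def rterm_poly_def[abs_def])

lemma sum_list_concat_deco: "sum_list (map F (concat (map (\<lambda>(u, v). map (\<lambda>r. u # r) (deco n v)) L))) =
   sum_list (map (\<lambda>pq. sum_list (map (\<lambda>ps. F (fst pq # ps)) (deco n (snd pq)))) L)"
  by (induction L) (auto simp: comp_def)

lemma sum_list_deco_Suc: "sum_list (map F (deco (Suc n) w)) = cop_sum (\<lambda>a v. sum_list (map (\<lambda>ps. F (a # ps)) (deco n v))) w"
  by (simp only: deco.simps sum_list_concat_deco cop_sum_def)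

lemma rterm_poly_Cons_Cons: "rterm_poly (k # k' # ks) (a # b # ps) =
  basis a \<odot> (basis (replicate k X0) \<odot> (antipode (basis b) \<odot> (basis [X1] \<odot> rterm_poly (k' # ks) ps)))"
proof -
  obtain s r where "rterm (k' # ks) ps = (s, r)" by force
  then show ?thesis
    by (simp add: rterm_poly_def antipode_basis nc_mult_smult_left nc_mult_smult_right mult.commute)
qed

lemma rhs_word_step: "rhs_word (k # k' # ks) u =
   cop_sum (\<lambda>a v. basis a \<odot> (basis (replicate k X0) \<odot> cop_sum (\<lambda>b r. antipode (basis b) \<odot> (basis [X1] \<odot> rhs_word (k' # ks) r)) v)) u"
proof -
  have n: "2 * (length (k # k' # ks) - 1) = Suc (Suc (2 * (length (k' # ks) - 1)))" by simp
  show ?thesis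
    unfolding rhs_word_def n sum_list_deco_Suc rterm_poly_Cons_Cons
    by (simp add: nc_mult_sum_list_right map_map comp_def cop_sum_mult_left[symmetric] del: basis_mult_basis)
qed

section \<open>Consequences of the post-Lie axioms\<close>

context
  fixes T :: "ncpoly \<Rightarrow> ncpoly \<Rightarrow> ncpoly"
  assumes T_ext: "is_ext T"
begin

lemma T_in_U[simp,intro]: "a \<in> U \<Longrightarrow> b \<in> U \<Longrightarrow> T a b \<in> U"
  using T_ext by (simp add: is_ext_def)

lemma T_add_left: "a \<in> U \<Longrightarrow> b \<in> U \<Longrightarrow> c \<in> U \<Longrightarrow> T (a + b) c = T a c + T b c"
  using T_ext by (simp add: is_ext_def)

lemma T_smult_left: "a \<in> U \<Longrightarrow> b \<in> U \<Longrightarrow> T (nc_smult r a) b = nc_smult r (T a b)"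
  using T_ext by (simp add: is_ext_def)

lemma T_add_right: "a \<in> U \<Longrightarrow> b \<in> U \<Longrightarrow> c \<in> U \<Longrightarrow> T a (b + c) = T a b + T a c"
  using T_ext by (simp add: is_ext_def)

lemma T_smult_right: "a \<in> U \<Longrightarrow> b \<in> U \<Longrightarrow> T a (nc_smult r b) = nc_smult r (T a b)"
  using T_ext by (simp add: is_ext_def)

lemma T_lieX_x0: "f \<in> lieX \<Longrightarrow> T f (basis [X0]) = 0"
  using T_ext by (simp add: is_ext_def)

lemma T_lieX_x1: "f \<in> lieX \<Longrightarrow> T f (basis [X1]) = bracket (basis [X1]) f"
  using T_ext by (simp add: is_ext_def)

lemma T_lieX_bracket: "f \<in> lieX \<Longrightarrow> g \<in> lieX \<Longrightarrow> h \<in> lieX \<Longrightarrow> T f (bracket g h) = bracket (T f g) h + bracket g (T f h)"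
  using T_ext by (simp add: is_ext_def)

lemma T_lieX_one: "f \<in> lieX \<Longrightarrow> T f (basis []) = 0"
  using T_ext by (simp add: is_ext_def)

lemma T_one_left: "a \<in> U \<Longrightarrow> T (basis []) a = a"
  using T_ext by (simp add: is_ext_def)

lemma T_lieX_mult_left: "x \<in> lieX \<Longrightarrow> a \<in> U \<Longrightarrow> y \<in> lieX \<Longrightarrow> T (x \<odot> a) y = T x (T a y) - T (T x a) y"
  using T_ext by (simp add: is_ext_def)

lemma T_nc_mult_right: "a \<in> U \<Longrightarrow> b \<in> U \<Longrightarrow> c \<in> U \<Longrightarrow> T a (b \<odot> c) = lin_ext (cop_sum (\<lambda>u v. T (basis u) b \<odot> T (basis v) c)) a"
  using T_ext by (simp add: is_ext_def sweedler2_eq)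

lemma U_linear_T_left: "b \<in> U \<Longrightarrow> U_linear (\<lambda>x. T x b)"
  by (rule U_linearI) (simp_all add: T_add_left T_smult_left)

lemma U_linear_T_right: "a \<in> U \<Longrightarrow> U_linear (T a)"
  by (rule U_linearI) (simp_all add: T_add_right T_smult_right)

lemma T_eq_lin_ext_left: "a \<in> U \<Longrightarrow> b \<in> U \<Longrightarrow> T a b = lin_ext (\<lambda>w. T (basis w) b) a"
  using U_linear_eq_lin_ext[OF U_linear_T_left[of b], of a] by simp

lemma T_eq_lin_ext_right: "a \<in> U \<Longrightarrow> b \<in> U \<Longrightarrow> T a b = lin_ext (\<lambda>w. T a (basis w)) b"
  using U_linear_eq_lin_ext[OF U_linear_T_right[of a], of b] by simp

lemma T_lieX_derivation: "f \<in> lieX \<Longrightarrow> b \<in> U \<Longrightarrow> c \<in> U \<Longrightarrow> T f (b \<odot> c) = T f b \<odot> c + b \<odot> T f c"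
proof -
  assume f: "f \<in> lieX" and b: "b \<in> U" and c: "c \<in> U"
  have fU: "f \<in> U" using f by (rule lieX_in_U)
  have "T f (b \<odot> c) = lin_ext (cop_sum (\<lambda>u v. T (basis u) b \<odot> T (basis v) c)) f" using fU b c by (rule T_nc_mult_right)
  also have "\<dots> = lin_ext (\<lambda>u. T (basis u) b \<odot> T (basis []) c + T (basis []) b \<odot> T (basis u) c) f"
    by (rule primitiveD[OF lieX_primitive[OF f]])
  also have "\<dots> = lin_ext (\<lambda>u. T (basis u) b \<odot> c + b \<odot> T (basis u) c) f"
    using b c by (simp only: T_one_left)
  also have "\<dots> = lin_ext (\<lambda>u. T (basis u) b \<odot> c) f + lin_ext (\<lambda>u. b \<odot> T (basis u) c) f"
    by (rule lin_ext_add_fun)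
  also have "\<dots> = lin_ext (\<lambda>u. T (basis u) b) f \<odot> c + b \<odot> lin_ext (\<lambda>u. T (basis u) c) f"
    by (simp only: lin_ext_mult_left lin_ext_mult_right)
  also have "\<dots> = T f b \<odot> c + b \<odot> T f c"
    using fU b c by (simp only: T_eq_lin_ext_left[symmetric])
  finally show ?thesis .
qed

lemma T_lieX_closed:
  assumes "f \<in> lieX" and "g \<in> lieX"
  shows "T f g \<in> lieX"
  using assms(2)
proof (induction rule: lieX.induct)
  case gen0 thus ?case using assms(1) by (simp add: T_lieX_x0 lieX_zero)
next
  case gen1 thus ?case using assms(1) by (simp add: T_lieX_x1 lieX_bracket lieX.gen1)
next
  case (add a b) thus ?case using assms(1) by (simp add: T_add_right lieX_in_U lieX_add)
next
  case (smult a c) thus ?case using assms(1) by (simp add: T_smult_right lieX_in_U lieX_smult)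
next
  case (brk a b) thus ?case using assms(1) by (simp add: T_lieX_bracket lieX_bracket lieX_add)
qed

lemma T_lieX_basis_Nil: "f \<in> lieX \<Longrightarrow> T f (basis w) [] = 0"
proof (induction w)
  case Nil thus ?case by (simp add: T_lieX_one ncpoly_apply)
next
  case (Cons c w)
  have "T f (basis (c # w)) = T f (basis [c]) \<odot> basis w + basis [c] \<odot> T f (basis w)"
    using T_lieX_derivation[OF Cons.prems, of "basis [c]" "basis w"] by simp
  thus ?case using Cons lieX_Nil[OF T_lieX_closed[OF Cons.prems lieX_letter]]
    by (simp add: ncpoly_apply basis_Nil_apply)
qed

lemma T_lieX_Nil: "f \<in> lieX \<Longrightarrow> a \<in> U \<Longrightarrow> T f a [] = 0"
  by (simp add: T_eq_lin_ext_right[of f a] lieX_in_U lin_ext_apply T_lieX_basis_Nil)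

lemma vanishes_on_prod_T_prod:
  assumes psi: "U_linear psi"
    and vanish: "\<And>hs. length hs = k \<Longrightarrow> set hs \<subseteq> lieX \<Longrightarrow> psi (nc_prod_list hs) = 0"
    and g: "g \<in> lieX"
  shows "set pre \<subseteq> lieX \<Longrightarrow> set rest \<subseteq> lieX \<Longrightarrow> length pre + length rest = k \<Longrightarrow>
     psi (nc_prod_list pre \<odot> T g (nc_prod_list rest)) = 0"
proof (induction rest arbitrary: pre)
  case Nil thus ?case using g by (simp add: T_lieX_one U_linear_zero[OF psi])
next
  case (Cons h r)
  have pU: "set pre \<subseteq> U" and rU: "set r \<subseteq> U" and hU: "h \<in> U" and gU: "g \<in> U"
    using Cons.prems g lieX_in_U by auto
  have tg: "T g h \<in> lieX" using T_lieX_closed[OF g] Cons.prems by simp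
  have "T g (nc_prod_list (h # r)) = T g h \<odot> nc_prod_list r + h \<odot> T g (nc_prod_list r)"
    using T_lieX_derivation[OF g hU nc_prod_list_in_U[OF rU]] by simp
  hence "nc_prod_list pre \<odot> T g (nc_prod_list (h # r)) = nc_prod_list (pre @ [T g h] @ r) + nc_prod_list (pre @ [h]) \<odot> T g (nc_prod_list r)"
    using pU rU hU gU tg lieX_in_U[OF tg]
    by (simp add: nc_mult_add_right nc_prod_list_append nc_mult_assoc nc_prod_list_in_U T_in_U)
  moreover have "psi (nc_prod_list (pre @ [T g h] @ r)) = 0"
    using Cons.prems tg by (intro vanish) auto
  moreover have "psi (nc_prod_list (pre @ [h]) \<odot> T g (nc_prod_list r)) = 0"
    using Cons.prems by (intro Cons.IH) auto
  moreover have "nc_prod_list (pre @ [T g h] @ r) \<in> U" "nc_prod_list (pre @ [h]) \<odot> T g (nc_prod_list r) \<in> U"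
    using pU rU hU gU tg lieX_in_U[OF tg] by (auto intro!: nc_prod_list_in_U nc_mult_in_U T_in_U)
  ultimately show ?case by (simp add: U_linear_add[OF psi])
qed

(* Induction on the number of factors of a product of elements of f_X: psi (f P) = - psi (f \<triangleright> P),
   and by the Leibniz rule f \<triangleright> P is a sum of products with the same number of factors. *)
lemma vanishes_on_basis:
  assumes psi: "U_linear psi" and one: "psi (basis []) = 0"
    and rec: "\<And>f a. f \<in> lieX \<Longrightarrow> a \<in> U \<Longrightarrow> psi a = 0 \<Longrightarrow> psi (f \<odot> a) + psi (T f a) = 0"
  shows "psi (basis w) = 0"
proof -
  have main: "\<And>gs. length gs = k \<Longrightarrow> set gs \<subseteq> lieX \<Longrightarrow> psi (nc_prod_list gs) = 0" for k
  proof (induction k)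
    case 0 thus ?case using one by simp
  next
    case (Suc k)
    then obtain g gs' where gs: "gs = g # gs'" by (cases gs) auto
    have g: "g \<in> lieX" and gs': "set gs' \<subseteq> lieX" "length gs' = k" using Suc.prems gs by auto
    have pU: "nc_prod_list gs' \<in> U" using gs'(1) lieX_in_U by (blast intro: nc_prod_list_in_U)
    have z: "psi (nc_prod_list gs') = 0" using Suc.IH gs' by blast
    have "psi (nc_prod_list [] \<odot> T g (nc_prod_list gs')) = 0"
      by (rule vanishes_on_prod_T_prod[OF psi Suc.IH g]) (use gs' in auto)
    hence "psi (T g (nc_prod_list gs')) = 0" using T_in_U[OF lieX_in_U[OF g] pU] by simp
    thus ?case using rec[OF g pU z] gs by simp
  qed
  show ?thesis
    by (subst basis_eq_nc_prod_list) (rule main[OF refl], auto intro: lieX_letter)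
qed

lemma T_basis_eq_of_recursion:
  assumes y: "y \<in> lieX" and R: "U_linear R" and R_one: "R (basis []) = y"
    and R_rec: "\<And>f a. f \<in> lieX \<Longrightarrow> a \<in> U \<Longrightarrow> R (f \<odot> a) + R (T f a) = T f (R a)"
  shows "T (basis u) y = R (basis u)"
proof -
  define psi where "psi a = T a y - R a" for a
  have "U_linear psi"
    unfolding psi_def by (rule U_linear_diff_fun[OF U_linear_T_left[OF lieX_in_U[OF y]] R])
  then have "psi (basis u) = 0"
  proof (rule vanishes_on_basis)
    show "psi (basis []) = 0"
      using y by (simp add: psi_def T_one_left lieX_in_U R_one)
  next
    fix f a assume f: "f \<in> lieX" and a: "a \<in> U" and "psi a = 0"
    then have "T a y = R a" by (simp add: psi_def)
    then show "psi (f \<odot> a) + psi (T f a) = 0"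
      using T_lieX_mult_left[OF f a y] R_rec[OF f a] by (simp add: psi_def algebra_simps)
  qed
  then show ?thesis by (simp add: psi_def)
qed

lemma T_basis_x0: "T (basis u) (basis [X0]) = (if u = [] then basis [X0] else 0)"
proof -
  have "T (basis u) (basis [X0]) = nc_smult (basis u []) (basis [X0])"
  proof (rule T_basis_eq_of_recursion[where R = "\<lambda>a. nc_smult (a []) (basis [X0])", OF lieX.gen0])
    show "U_linear (\<lambda>a. nc_smult (a []) (basis [X0]))"
      by (rule U_linearI) (simp_all add: ncpoly_apply nc_smult_add_left)
    show "nc_smult (basis [] []) (basis [X0]) = basis [X0]"
      by (simp add: basis_apply)
  next
    fix f a assume f: "f \<in> lieX" and a: "a \<in> U"
    show "nc_smult ((f \<odot> a) []) (basis [X0]) + nc_smult (T f a []) (basis [X0])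
        = T f (nc_smult (a []) (basis [X0]))"
      using lieX_Nil[OF f] T_lieX_Nil[OF f a] lieX_in_U[OF f] by (simp add: T_smult_right T_lieX_x0[OF f])
  qed
  then show ?thesis by (simp add: basis_apply)
qed

lemma x0_mult_cancel:
  assumes "basis [X0] \<odot> P = basis [X0] \<odot> Q" and "P \<in> U" and "Q \<in> U"
  shows "P = Q"
proof
  fix w
  have drop_x0: "(basis [X0] \<odot> R) (X0 # w) = R w" if "R \<in> U" for R
  proof -
    have "(basis [X0] \<odot> lin_ext basis R) (X0 # w) = lin_ext (\<lambda>v. basis (X0 # v)) R (X0 # w)"
      by (simp add: lin_ext_mult_left[symmetric])
    also have "\<dots> = lin_ext basis R w"
      by (simp add: lin_ext_apply basis_apply)
    finally show ?thesis using that by (simp add: lin_ext_basis_decomp)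
  qed
  show "P w = Q w" using drop_x0[of P] drop_x0[of Q] assms by simp
qed

lemma T_basis_X0_Cons: "T (basis v) (basis (X0 # z)) = basis [X0] \<odot> T (basis v) (basis z)"
proof -
  have "T (basis v) (basis (X0 # z)) = cop_sum (\<lambda>p q. T (basis p) (basis [X0]) \<odot> T (basis q) (basis z)) v"
    using T_nc_mult_right[of "basis v" "basis [X0]" "basis z"] by simp
  also have "\<dots> = cop_sum (\<lambda>p q. if p = [] then basis [X0] \<odot> T (basis q) (basis z) else 0) v"
    by (rule cop_sum_cong) (simp add: T_basis_x0)
  also have "\<dots> = basis [X0] \<odot> T (basis v) (basis z)"
    by (rule cop_sum_counit_left)
  finally show ?thesis .
qed

lemma T_basis_one: "T (basis u) (basis []) = (if u = [] then basis [] else 0)"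
proof -
  have "basis [X0] \<odot> T (basis u) (basis []) = T (basis u) (basis [X0])"
    using T_basis_X0_Cons[of u "[]"] by simp
  also have "\<dots> = basis [X0] \<odot> (if u = [] then basis [] else 0)"
    by (simp add: T_basis_x0)
  finally show ?thesis by (rule x0_mult_cancel) auto
qed

lemma T_lieX_antipode: "f \<in> lieX \<Longrightarrow> T f (antipode (basis w)) = antipode (T f (basis w))"
proof (induction w)
  case Nil thus ?case by (simp add: antipode_basis T_lieX_one U_linear_zero[OF U_linear_antipode])
next
  case (Cons c w)
  have f: "f \<in> lieX" by fact
  have fU: "f \<in> U" using f by (rule lieX_in_U)
  have g: "T f (basis [c]) \<in> lieX" by (rule T_lieX_closed[OF f lieX_letter])
  have gU: "T f (basis [c]) \<in> U" using g by (rule lieX_in_U)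
  have Sc: "antipode (basis [c]) = - basis [c]" by (simp add: antipode_basis nc_smult_minus_one)
  have "T f (antipode (basis (c # w))) = T f (antipode (basis w) \<odot> antipode (basis [c]))"
    using antipode_nc_mult[of "basis [c]" "basis w"] by simp
  also have "\<dots> = T f (antipode (basis w)) \<odot> antipode (basis [c]) + antipode (basis w) \<odot> T f (antipode (basis [c]))"
    by (rule T_lieX_derivation[OF f]) auto
  also have "\<dots> = antipode (T f (basis w)) \<odot> antipode (basis [c]) + antipode (basis w) \<odot> (- T f (basis [c]))"
    using Cons fU by (simp add: Sc U_linear_uminus[OF U_linear_T_right[OF fU]])
  finally have l: "T f (antipode (basis (c # w))) = antipode (T f (basis w)) \<odot> antipode (basis [c]) + antipode (basis w) \<odot> (- T f (basis [c]))" .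
  have "antipode (T f (basis (c # w))) = antipode (T f (basis [c]) \<odot> basis w + basis [c] \<odot> T f (basis w))"
    using T_lieX_derivation[OF f, of "basis [c]" "basis w"] by simp
  also have "\<dots> = antipode (basis w) \<odot> antipode (T f (basis [c])) + antipode (T f (basis w)) \<odot> antipode (basis [c])"
    using gU fU by (simp add: U_linear_add[OF U_linear_antipode] antipode_nc_mult)
  also have "\<dots> = antipode (basis w) \<odot> (- T f (basis [c])) + antipode (T f (basis w)) \<odot> antipode (basis [c])"
    by (simp add: antipode_lieX[OF g])
  finally show ?case using l by (simp add: add.commute)
qed

lemma lin_ext_T_lieX_Cons:
  assumes f: "f \<in> lieX"
  shows "lin_ext Y (T f (basis (c # p)))
    = lin_ext (\<lambda>u. Y (u @ p)) (T f (basis [c])) + lin_ext (\<lambda>v. Y (c # v)) (T f (basis p))"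
proof -
  have fU: "f \<in> U" and gU: "T f (basis [c]) \<in> U"
    using lieX_in_U[OF f] by auto
  have "T f (basis (c # p)) = T f (basis [c]) \<odot> basis p + basis [c] \<odot> T f (basis p)"
    using T_lieX_derivation[OF f, of "basis [c]" "basis p"] by simp
  then show ?thesis
    using fU gU by (simp add: lin_ext_add lin_ext_mult_basis_right lin_ext_basis_mult_left)
qed

lemma T_lieX_coderivation:
  assumes f: "f \<in> lieX"
  shows "lin_ext (cop_sum X) (T f (basis w)) =
    cop_sum (\<lambda>p q. lin_ext (\<lambda>p'. X p' q) (T f (basis p)) + lin_ext (\<lambda>q'. X p q') (T f (basis q))) w"
proof (induction w arbitrary: X)
  case Nil show ?case using f by (simp add: T_lieX_one)
next
  case (Cons c w)
  define g where "g = T f (basis [c])"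
  define D where "D p = T f (basis p)" for p
  have D_Cons: "lin_ext Y (D (c # p)) = lin_ext (\<lambda>u. Y (u @ p)) g + lin_ext (\<lambda>v. Y (c # v)) (D p)" for Y p
    unfolding D_def g_def by (rule lin_ext_T_lieX_Cons[OF f])
  have "lin_ext (cop_sum X) (D (c # w)) = lin_ext (\<lambda>u. cop_sum X (u @ w)) g + lin_ext (\<lambda>v. cop_sum X (c # v)) (D w)"
    by (rule D_Cons)
  also have "lin_ext (\<lambda>u. cop_sum X (u @ w)) g =
      cop_sum (\<lambda>p q. lin_ext (\<lambda>u. X (u @ p) q) g + lin_ext (\<lambda>u. X p (u @ q)) g) w"
    unfolding g_def by (rule primitive_cop_sum_append[OF lieX_primitive[OF T_lieX_closed[OF f lieX_letter]]])
  also have "lin_ext (\<lambda>v. cop_sum X (c # v)) (D w)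
      = lin_ext (cop_sum (\<lambda>p q. X (c # p) q)) (D w) + lin_ext (cop_sum (\<lambda>p q. X p (c # q))) (D w)"
    by (simp add: lin_ext_add_fun)
  also have "\<dots> = cop_sum (\<lambda>p q. lin_ext (\<lambda>p'. X (c # p') q) (D p) + lin_ext (\<lambda>q'. X (c # p) q') (D q)) w
      + cop_sum (\<lambda>p q. lin_ext (\<lambda>p'. X p' (c # q)) (D p) + lin_ext (\<lambda>q'. X p (c # q')) (D q)) w"
    using Cons.IH[of "\<lambda>p q. X (c # p) q"] Cons.IH[of "\<lambda>p q. X p (c # q)"] by (simp add: D_def)
  also have "cop_sum (\<lambda>p q. lin_ext (\<lambda>u. X (u @ p) q) g + lin_ext (\<lambda>u. X p (u @ q)) g) w + \<dots>
      = cop_sum (\<lambda>p q. lin_ext (\<lambda>p'. X p' q) (D p) + lin_ext (\<lambda>q'. X p q') (D q)) (c # w)"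
    by (simp add: D_Cons cop_sum_add[symmetric] add_ac)
  finally show ?case by (simp add: D_def)
qed

definition ad_x1 :: "word \<Rightarrow> ncpoly" where
  "ad_x1 u = cop_sum (\<lambda>p q. antipode (basis p) \<odot> (basis [X1] \<odot> basis q)) u"

lemma ad_x1_in_U[simp]: "ad_x1 u \<in> U" by (auto simp: ad_x1_def)

lemma ad_x1_mult_lieX: assumes f: "f \<in> lieX"
  shows "lin_ext ad_x1 (f \<odot> basis w) = cop_sum (\<lambda>p q. antipode (basis p) \<odot> (T f (basis [X1]) \<odot> basis q)) w"
proof -
  have fU: "f \<in> U" using f by (rule lieX_in_U)
  let ?G = "\<lambda>p q. antipode (basis p) \<odot> (basis [X1] \<odot> basis q)"
  have "lin_ext ad_x1 (f \<odot> basis w) = lin_ext (\<lambda>u. ad_x1 (u @ w)) f"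
    using fU by (simp add: lin_ext_mult_basis_right)
  also have "\<dots> = cop_sum (\<lambda>p q. lin_ext (\<lambda>u. ?G (u @ p) q) f + lin_ext (\<lambda>u. ?G p (u @ q)) f) w"
    unfolding ad_x1_def by (rule primitive_cop_sum_append[OF lieX_primitive[OF f]])
  also have "\<dots> = cop_sum (\<lambda>p q. antipode (basis p) \<odot> (T f (basis [X1]) \<odot> basis q)) w"
  proof (rule cop_sum_cong)
    fix p q
    have e1: "?G (u @ p) q = antipode (basis p) \<odot> (antipode (basis u) \<odot> (basis [X1] \<odot> basis q))" for u
      using antipode_nc_mult[of "basis u" "basis p"] by (simp add: nc_mult_assoc)
    have e2: "?G p (u @ q) = antipode (basis p) \<odot> (basis [X1] \<odot> (basis u \<odot> basis q))" for u
      by simp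
    have "lin_ext (\<lambda>u. ?G (u @ p) q) f = antipode (basis p) \<odot> (antipode f \<odot> (basis [X1] \<odot> basis q))"
      unfolding e1 by (simp add: lin_ext_mult_left lin_ext_mult_right lin_ext_antipode)
    also have "\<dots> = - (antipode (basis p) \<odot> (f \<odot> (basis [X1] \<odot> basis q)))"
      by (simp add: antipode_lieX[OF f] nc_mult_uminus_left nc_mult_uminus_right)
    finally have l1: "lin_ext (\<lambda>u. ?G (u @ p) q) f = - (antipode (basis p) \<odot> (f \<odot> (basis [X1] \<odot> basis q)))" .
    have l2: "lin_ext (\<lambda>u. ?G p (u @ q)) f = antipode (basis p) \<odot> (basis [X1] \<odot> (f \<odot> basis q))"
      unfolding e2 by (simp add: lin_ext_mult_left lin_ext_mult_right lin_ext_basis_decomp fU del: basis_mult_basis)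
    show "lin_ext (\<lambda>u. ?G (u @ p) q) f + lin_ext (\<lambda>u. ?G p (u @ q)) f = antipode (basis p) \<odot> (T f (basis [X1]) \<odot> basis q)"
      unfolding l1 l2 using fU
      by (simp add: T_lieX_x1[OF f] bracket_eq nc_mult_diff_left nc_mult_diff_right nc_mult_assoc)
  qed
  finally show ?thesis .
qed

lemma ad_x1_T_lieX: assumes f: "f \<in> lieX"
  shows "lin_ext ad_x1 (T f (basis w)) = cop_sum (\<lambda>p q. T f (antipode (basis p)) \<odot> (basis [X1] \<odot> basis q) + antipode (basis p) \<odot> (basis [X1] \<odot> T f (basis q))) w"
proof -
  have fU: "f \<in> U" using f by (rule lieX_in_U)
  have "lin_ext ad_x1 (T f (basis w)) = cop_sum (\<lambda>p q. lin_ext (\<lambda>p'. antipode (basis p') \<odot> (basis [X1] \<odot> basis q)) (T f (basis p))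
      + lin_ext (\<lambda>q'. antipode (basis p) \<odot> (basis [X1] \<odot> basis q')) (T f (basis q))) w"
    unfolding ad_x1_def by (rule T_lieX_coderivation[OF f])
  also have "\<dots> = cop_sum (\<lambda>p q. T f (antipode (basis p)) \<odot> (basis [X1] \<odot> basis q) + antipode (basis p) \<odot> (basis [X1] \<odot> T f (basis q))) w"
    using fU by (simp add: lin_ext_mult_left lin_ext_mult_right lin_ext_antipode lin_ext_basis_decomp T_lieX_antipode[OF f] del: basis_mult_basis)
  finally show ?thesis .
qed

lemma T_lieX_ad_x1: assumes f: "f \<in> lieX"
  shows "T f (ad_x1 w) = cop_sum (\<lambda>p q. T f (antipode (basis p)) \<odot> (basis [X1] \<odot> basis q)
     + antipode (basis p) \<odot> (T f (basis [X1]) \<odot> basis q + basis [X1] \<odot> T f (basis q))) w"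
proof -
  have fU: "f \<in> U" using f by (rule lieX_in_U)
  have "T f (ad_x1 w) = cop_sum (\<lambda>p q. T f (antipode (basis p) \<odot> (basis [X1] \<odot> basis q))) w"
    unfolding ad_x1_def by (rule U_linear_cop_sum[OF U_linear_T_right[OF fU]]) simp
  also have "\<dots> = cop_sum (\<lambda>p q. T f (antipode (basis p)) \<odot> (basis [X1] \<odot> basis q)
     + antipode (basis p) \<odot> (T f (basis [X1]) \<odot> basis q + basis [X1] \<odot> T f (basis q))) w"
    by (simp add: T_lieX_derivation[OF f] del: basis_mult_basis)
  finally show ?thesis .
qed

lemma ad_x1_recursion_basis: "f \<in> lieX \<Longrightarrow> lin_ext ad_x1 (f \<odot> basis w) + lin_ext ad_x1 (T f (basis w)) = T f (ad_x1 w)"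
  by (simp add: ad_x1_mult_lieX ad_x1_T_lieX T_lieX_ad_x1 cop_sum_add[symmetric] nc_mult_add_right add_ac del: basis_mult_basis)

lemma ad_x1_recursion: assumes f: "f \<in> lieX" and a: "a \<in> U"
  shows "lin_ext ad_x1 (f \<odot> a) + lin_ext ad_x1 (T f a) = T f (lin_ext ad_x1 a)"
proof -
  have fU: "f \<in> U" using f by (rule lieX_in_U)
  have l1: "U_linear (\<lambda>x. lin_ext ad_x1 (f \<odot> x) + lin_ext ad_x1 (T f x))"
    by (intro U_linear_add_fun U_linear_comp[OF U_linear_lin_ext] U_linear_mult_left U_linear_T_right[OF fU]) (simp_all add: fU)
  have l2: "U_linear (\<lambda>x. T f (lin_ext ad_x1 x))"
    by (rule U_linear_comp[OF U_linear_T_right[OF fU] U_linear_lin_ext]) simp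
  have "lin_ext ad_x1 (f \<odot> a) + lin_ext ad_x1 (T f a) = lin_ext (\<lambda>w. lin_ext ad_x1 (f \<odot> basis w) + lin_ext ad_x1 (T f (basis w))) a"
    using U_linear_eq_lin_ext[OF l1 a] by simp
  also have "\<dots> = lin_ext (\<lambda>w. T f (lin_ext ad_x1 (basis w))) a"
    by (simp add: ad_x1_recursion_basis[OF f])
  also have "\<dots> = T f (lin_ext ad_x1 a)"
    using U_linear_eq_lin_ext[OF l2 a] by simp
  finally show ?thesis .
qed

lemma T_basis_x1: "T (basis u) (basis [X1]) = ad_x1 u"
proof -
  have "T (basis u) (basis [X1]) = lin_ext ad_x1 (basis u)"
  proof (rule T_basis_eq_of_recursion[OF lieX.gen1 U_linear_lin_ext])
    show "lin_ext ad_x1 (basis []) = basis [X1]"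
      by (simp add: ad_x1_def antipode_basis)
  qed (rule ad_x1_recursion)
  then show ?thesis by simp
qed

lemma T_basis_x0_power: "T (basis v) (basis (replicate k X0 @ z)) = basis (replicate k X0) \<odot> T (basis v) (basis z)"
  by (induction k) (simp_all add: T_basis_X0_Cons basis_mult_basis_mult)

lemma T_basis_X1_Cons: "T (basis v) (basis (X1 # W)) = cop_sum (\<lambda>b v'. ad_x1 b \<odot> T (basis v') (basis W)) v"
proof -
  have "T (basis v) (basis (X1 # W)) = T (basis v) (basis [X1] \<odot> basis W)" by simp
  also have "\<dots> = cop_sum (\<lambda>p q. T (basis p) (basis [X1]) \<odot> T (basis q) (basis W)) v"
    using T_nc_mult_right[of "basis v" "basis [X1]" "basis W"] by simp
  finally show ?thesis by (simp add: T_basis_x1)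
qed

definition gl_word :: "nat list \<Rightarrow> word \<Rightarrow> ncpoly" where
  "gl_word ks = cop_sum (\<lambda>a v. basis a \<odot> T (basis v) (basis (word_of ks)))"

lemma gl_word_single: "gl_word [k] u = rhs_word [k] u"
proof -
  have "gl_word [k] u = cop_sum (\<lambda>a v. basis a \<odot> (basis (replicate k X0) \<odot> T (basis v) (basis []))) u"
    unfolding gl_word_def using T_basis_x0_power[of _ k "[]"] by simp
  also have "\<dots> = cop_sum (\<lambda>a v. if v = [] then basis (a @ replicate k X0) else 0) u"
    by (rule cop_sum_cong) (simp add: T_basis_one)
  also have "\<dots> = basis (u @ replicate k X0)" by (rule cop_sum_counit_right)
  finally show ?thesis by (simp add: rhs_word_def rterm_poly_def)
qed

lemma gl_word_step: "gl_word (k # k' # ks) u =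
   cop_sum (\<lambda>a v. basis a \<odot> (basis (replicate k X0) \<odot> cop_sum (\<lambda>b1 r. antipode (basis b1) \<odot> (basis [X1] \<odot> gl_word (k' # ks) r)) v)) u"
proof -
  let ?W = "word_of (k' # ks)"
  have inner: "T (basis v) (basis (X1 # ?W)) = cop_sum (\<lambda>b1 r. antipode (basis b1) \<odot> (basis [X1] \<odot> gl_word (k' # ks) r)) v" for v
  proof -
    have "T (basis v) (basis (X1 # ?W)) = cop_sum (\<lambda>b v'. cop_sum (\<lambda>b1 b2. antipode (basis b1) \<odot> (basis [X1] \<odot> basis b2) \<odot> T (basis v') (basis ?W)) b) v"
      by (simp add: T_basis_X1_Cons ad_x1_def cop_sum_mult_right del: basis_mult_basis)
    also have "\<dots> = cop_sum (\<lambda>b1 r. cop_sum (\<lambda>b2 v'. antipode (basis b1) \<odot> (basis [X1] \<odot> basis b2) \<odot> T (basis v') (basis ?W)) r) v"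
      by (rule cop_sum_coassoc)
    also have "\<dots> = cop_sum (\<lambda>b1 r. antipode (basis b1) \<odot> (basis [X1] \<odot> gl_word (k' # ks) r)) v"
      by (simp add: gl_word_def cop_sum_mult_left nc_mult_assoc del: basis_mult_basis)
    finally show ?thesis .
  qed
  show ?thesis
    unfolding gl_word_def[of "k # k' # ks"] by (simp add: T_basis_x0_power inner del: basis_mult_basis)
qed

lemma gl_word_eq_rhs_word: "ks \<noteq> [] \<Longrightarrow> gl_word ks = rhs_word ks"
proof (induction ks rule: induct_list012)
  case 1 thus ?case by simp
next
  case (2 k) show ?case by (rule ext) (rule gl_word_single)
next
  case (3 k k' ks)
  show ?case using "3.IH"(2) by (intro ext) (simp add: gl_word_step rhs_word_step del: basis_mult_basis)
qed

end

(* Both sides vanish outside U. *)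
theorem mainTheorem14:
  fixes T :: "ncpoly \<Rightarrow> ncpoly \<Rightarrow> ncpoly" and A :: ncpoly and ks :: "nat list"
  assumes "is_ext T" and "A \<in> U" and "ks \<noteq> []"
  shows "gl T A (basis (word_of ks)) = rhs A ks"
proof -
  have "gl T A (basis (word_of ks)) = lin_ext (gl_word T ks) A"
    by (simp add: gl_eq_lin_ext gl_word_def[OF assms(1)])
  also have "\<dots> = lin_ext (rhs_word ks) A"
    by (simp add: gl_word_eq_rhs_word[OF assms(1,3)])
  also have "\<dots> = rhs A ks"
    by (simp add: rhs_eq_lin_ext)
  finally show ?thesis .
qed

end
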